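(* Let $\mathfrak{g}$ be a complex simple Lie algebra of rank $l$ with Cartan matrix $A=(a_{ij})_{i,j\in I}$, $I=\{1,\dots,l\}$, and let $D=\operatorname{diag}(d_1,\dots,d_l)$ with $d_i$ coprime positive integers such that $DA$ is symmetric. Let $\mathcal{P}$ be the group (under componentwise multiplication) of $l$-tuples $P=(P_1(u),\dots,P_l(u))$ of nonzero rational functions in $u$ over $\mathbb{C}$. For $j\in I$ and $P\in\mathcal{P}$ define $T_j(P)\in\mathcal{P}$ by \begin{align*} (T_j(P))_i&=P_i(u) &&\text{if } a_{ij}=0,\\ (T_j(P))_i&=P_i(u)\,P_j\!\left(u-\tfrac{d_i}{2}\right) &&\text{if } a_{ij}=-1,\\ (T_j(P))_i&=P_i(u)\,P_j(u-1)\,P_j(u) &&\text{if } a_{ij}=-2,\\ (T_j(P))_i&=P_i(u)\,P_j\!\left(u-\tfrac32\right)P_j\!\left(u-\tfrac12\right)P_j\!\left(u+\tfrac12\right) &&\text{if } a_{ij}=-3,\\ (T_j(P))_j&=\frac{1}{P_j(u-d_j)}. \end{align*} Then these formulas define an action of the braid group $\mathcal{B}$ of $\mathfrak{g}$ on $\mathcal{P}$, in which the generator $T_j$ acts by $P\mapsto T_j(P)$; for $w$ in the Weyl group with reduced expression $w=s_{r_1}\cdots s_{r_p}$ one sets $T_w(P)=T_{r_1}(T_{r_2}(\cdots T_{r_p}(P)))$.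
   Context: The braid group $\mathcal{B}$ of $\mathfrak{g}$ is the group generated by $T_i$, $i\in I$, with relations $T_iT_j=T_jT_i$ if $a_{ij}=0$; $T_iT_jT_i=T_jT_iT_j$ if $a_{ij}a_{ji}=1$; $(T_iT_j)^2=(T_jT_i)^2$ if $a_{ij}a_{ji}=2$; $(T_iT_j)^3=(T_jT_i)^3$ if $a_{ij}a_{ji}=3$. The $s_i$ are the simple reflections of the Weyl group. *)

theory Defs
  imports Complex_Main "HOL-Computational_Algebra.Polynomial_Factorial" "HOL-Computational_Algebra.Field_as_Ring" "HOL-Computational_Algebra.Normalized_Fraction"
begin

type_synonym ratfun = "complex poly fract"

text \<open>Substitution u := u - c in a rational function: (shift c f)(u) = f(u - c).\<close>
definition shift :: "complex \<Rightarrow> ratfun \<Rightarrow> ratfun" where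
  "shift c f = Fract (pcompose (fst (quot_of_fract f)) [:-c, 1:])
                     (pcompose (snd (quot_of_fract f)) [:-c, 1:])"

text \<open>Cartan matrix of a complex simple Lie algebra (finite type, indecomposable),
  with symmetrizer d: d_i positive coprime integers with DA symmetric.\<close>
definition simple_cartan :: "('i::finite \<Rightarrow> 'i \<Rightarrow> int) \<Rightarrow> ('i \<Rightarrow> nat) \<Rightarrow> bool" where
  "simple_cartan A d \<longleftrightarrow>
     (\<forall>i. A i i = 2) \<and>
     (\<forall>i j. i \<noteq> j \<longrightarrow> A i j \<le> 0) \<and>
     (\<forall>i j. A i j = 0 \<longleftrightarrow> A j i = 0) \<and>
     (\<forall>i. d i > 0) \<and>
     Gcd (d ` UNIV) = 1 \<and>
     (\<forall>i j. int (d i) * A i j = int (d j) * A j i) \<and>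
     (\<forall>x::'i \<Rightarrow> real. x \<noteq> (\<lambda>_. 0) \<longrightarrow>
        (\<Sum>i\<in>UNIV. \<Sum>j\<in>UNIV. real (d i) * real_of_int (A i j) * x i * x j) > 0) \<and>
     (\<forall>J::'i set. J \<noteq> {} \<and> J \<noteq> UNIV \<longrightarrow> (\<exists>i\<in>J. \<exists>j\<in>-J. A i j \<noteq> 0))"

definition Pset :: "('i \<Rightarrow> ratfun) set" where
  "Pset = {P. \<forall>i. P i \<noteq> 0}"

definition Tbraid :: "('i \<Rightarrow> 'i \<Rightarrow> int) \<Rightarrow> ('i \<Rightarrow> nat) \<Rightarrow> 'i \<Rightarrow> ('i \<Rightarrow> ratfun) \<Rightarrow> ('i \<Rightarrow> ratfun)" where
  "Tbraid A d j P = (\<lambda>i.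
     if i = j then inverse (shift (of_nat (d j)) (P j))
     else if A i j = 0 then P i
     else if A i j = -1 then P i * shift (of_nat (d i) / 2) (P j)
     else if A i j = -2 then P i * shift 1 (P j) * P j
     else if A i j = -3 then P i * shift (3/2) (P j) * shift (1/2) (P j) * shift (-1/2) (P j)
     else P i)"

end

theory Submission
  imports Defs
begin

text \<open>Each \<open>T\<^sub>j\<close> is invertible: it replaces \<open>P\<^sub>j\<close> by the inverse of a shift of \<open>P\<^sub>j\<close> and
  multiplies every other \<open>P\<^sub>i\<close> by shifts of \<open>P\<^sub>j\<close>, which can be divided out again. Once
  \<open>a\<^sub>i\<^sub>j\<close>, \<open>a\<^sub>j\<^sub>i\<close>, \<open>d\<^sub>i\<close>, \<open>d\<^sub>j\<close> are known, every braid relation is a componentwise identity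
  between products of shifted rational functions. For \<open>a\<^sub>i\<^sub>j a\<^sub>j\<^sub>i = 1\<close> one has \<open>d\<^sub>i = d\<^sub>j\<close>;
  for a multiple bond the shifts in the formulas are only right if the short end has \<open>d\<^sub>i = 1\<close>.
  This holds because a simple Cartan matrix has at most one multiple bond (a shortest chain of
  simple bonds joining two of them supports a nonzero vector of nonpositive \<open>DA\<close>-norm), so
  \<open>d\<^sub>i\<close> divides every \<open>d\<^sub>k\<close> along the connected Dynkin diagram, and the \<open>d\<^sub>k\<close> are coprime.\<close>

section \<open>Shifting rational functions\<close>

lemma pcompose_linear_eq_0_iff:
  fixes p :: "'a::idom poly"
  shows "pcompose p [:-c, 1:] = 0 \<longleftrightarrow> p = 0"
  by (rule pcompose_eq_0_iff) simp

lemma shift_Fract: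
  assumes "q \<noteq> 0"
  shows "shift c (Fract p q) = Fract (pcompose p [:-c, 1:]) (pcompose q [:-c, 1:])"
proof -
  obtain p' q' where pq': "quot_of_fract (Fract p q) = (p', q')"
    by (cases "quot_of_fract (Fract p q)")
  have "q' \<noteq> 0"
    using snd_quot_of_fract_nonzero[of "Fract p q"] pq' by simp
  moreover have "p' * q = p * q'"
    using Fract_quot_of_fract[of "Fract p q"] pq' eq_fract(1)[OF \<open>q' \<noteq> 0\<close> assms] by simp
  ultimately show ?thesis
    using assms unfolding shift_def pq'
    by (simp add: eq_fract pcompose_linear_eq_0_iff flip: pcompose_mult)
qed

lemma shift_mult: "shift c (f * g) = shift c f * shift c g"
  by (induct f, induct g) (simp add: shift_Fract pcompose_mult)

lemma shift_eq_0_iff [simp]: "shift c f = 0 \<longleftrightarrow> f = 0"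
  by (induct f) (simp add: shift_Fract Zero_fract_def eq_fract pcompose_linear_eq_0_iff)

lemma shift_inverse: "shift c (inverse f) = inverse (shift c f)"
proof (induct f)
  case (Fract p q)
  then show ?case
    by (cases "p = 0") (simp_all add: shift_Fract eq_fract)
qed

lemma shift_shift: "shift c (shift c' f) = shift (c + c') f"
proof (induct f)
  case (Fract p q)
  have "pcompose [:-c', 1:] [:-c, 1:] = [:-(c + c'), 1:]"
    by (simp add: pcompose_pCons)
  with Fract show ?case
    by (simp add: shift_Fract pcompose_linear_eq_0_iff flip: pcompose_assoc)
qed

lemma shift_0 [simp]: "shift 0 f = f"
  by (induct f) (simp add: shift_Fract)

lemma shift_1 [simp]: "shift c 1 = 1"
  by (simp add: shift_def pcompose_1 flip: One_fract_def)

section \<open>The operators \<open>T\<^sub>j\<close>\<close>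

definition Tbraid_factor :: "('i \<Rightarrow> 'i \<Rightarrow> int) \<Rightarrow> ('i \<Rightarrow> nat) \<Rightarrow> 'i \<Rightarrow> 'i \<Rightarrow> ratfun \<Rightarrow> ratfun" where
  "Tbraid_factor A d i j f =
     (if A i j = -1 then shift (of_nat (d i) / 2) f
      else if A i j = -2 then shift 1 f * f
      else if A i j = -3 then shift (3/2) f * shift (1/2) f * shift (-1/2) f
      else 1)"

lemma Tbraid_diag: "Tbraid A d j P j = inverse (shift (of_nat (d j)) (P j))"
  by (simp add: Tbraid_def)

lemma Tbraid_off_diag: "i \<noteq> j \<Longrightarrow> Tbraid A d j P i = P i * Tbraid_factor A d i j (P j)"
  by (auto simp: Tbraid_def Tbraid_factor_def mult.assoc)

lemma Tbraid_factor_mult: "Tbraid_factor A d i j (f * g) = Tbraid_factor A d i j f * Tbraid_factor A d i j g"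
  by (simp add: Tbraid_factor_def shift_mult mult_ac)

lemma Tbraid_factor_inverse: "Tbraid_factor A d i j (inverse f) = inverse (Tbraid_factor A d i j f)"
  by (simp add: Tbraid_factor_def shift_inverse mult_ac)

lemma Tbraid_factor_shift: "Tbraid_factor A d i j (shift c f) = shift c (Tbraid_factor A d i j f)"
  by (simp add: Tbraid_factor_def shift_shift shift_mult add.commute)

lemma Tbraid_factor_zero: "A i j = 0 \<Longrightarrow> Tbraid_factor A d i j f = 1"
  and Tbraid_factor_simple: "A i j = -1 \<Longrightarrow> Tbraid_factor A d i j f = shift (of_nat (d i) / 2) f"
  and Tbraid_factor_double: "A i j = -2 \<Longrightarrow> Tbraid_factor A d i j f = shift 1 f * f"
  and Tbraid_factor_triple:
    "A i j = -3 \<Longrightarrow> Tbraid_factor A d i j f = shift (3/2) f * shift (1/2) f * shift (-1/2) f"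
  by (simp_all add: Tbraid_factor_def)

lemma Tbraid_factor_nonzero: "f \<noteq> 0 \<Longrightarrow> Tbraid_factor A d i j f \<noteq> 0"
  by (simp add: Tbraid_factor_def)

lemmas Tbraid_simps = Tbraid_diag Tbraid_off_diag Tbraid_factor_mult Tbraid_factor_inverse
  Tbraid_factor_shift Tbraid_factor_nonzero shift_mult shift_inverse shift_shift
  Tbraid_factor_zero Tbraid_factor_simple Tbraid_factor_double Tbraid_factor_triple

lemma Tbraid_Pset:
  assumes "P \<in> Pset"
  shows "Tbraid A d j P \<in> Pset"
  unfolding Pset_def
proof (intro CollectI allI)
  fix i
  from assms show "Tbraid A d j P i \<noteq> 0"
    by (cases "i = j") (simp_all add: Pset_def Tbraid_diag Tbraid_off_diag Tbraid_factor_nonzero)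
qed

lemma Tbraid_bij:
  fixes A :: "'i \<Rightarrow> 'i \<Rightarrow> int" and j :: 'i
  shows "bij_betw (Tbraid A d j) Pset Pset"
proof -
  define U where "U Q k = (let f = inverse (shift (- of_nat (d j)) (Q j)) in
    if k = j then f else Q k / Tbraid_factor A d k j f)" for Q :: "'i \<Rightarrow> ratfun" and k
  show ?thesis
  proof (rule bij_betw_byWitness[where f' = U])
    show "\<forall>P\<in>Pset. U (Tbraid A d j P) = P"
    proof (intro ballI ext)
      fix P :: "'i \<Rightarrow> ratfun" and k
      assume "P \<in> Pset"
      then show "U (Tbraid A d j P) k = P k"
        by (cases "k = j") (simp_all add: Pset_def U_def Tbraid_simps)
    qed
    show "\<forall>Q\<in>Pset. Tbraid A d j (U Q) = Q"
    proof (intro ballI ext)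
      fix Q :: "'i \<Rightarrow> ratfun" and k
      assume "Q \<in> Pset"
      then show "Tbraid A d j (U Q) k = Q k"
        by (cases "k = j") (simp_all add: Pset_def U_def Tbraid_simps)
    qed
    show "Tbraid A d j ` Pset \<subseteq> Pset"
      using Tbraid_Pset by auto
    show "U ` Pset \<subseteq> Pset"
      by (auto simp: Pset_def U_def Let_def Tbraid_factor_nonzero split: if_splits)
  qed
qed

lemma Tbraid_commute:
  assumes "i \<noteq> j" "A i j = 0" "A j i = 0" "P \<in> Pset"
  shows "Tbraid A d i (Tbraid A d j P) = Tbraid A d j (Tbraid A d i P)"
proof
  fix k
  from assms show "Tbraid A d i (Tbraid A d j P) k = Tbraid A d j (Tbraid A d i P) k"
    by (cases "k = i"; cases "k = j") (simp_all add: Pset_def Tbraid_simps)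
qed

lemma Tbraid_braid_simple:
  assumes "i \<noteq> j" "A i j = -1" "A j i = -1" "d i = d j" "P \<in> Pset"
  shows "Tbraid A d i (Tbraid A d j (Tbraid A d i P)) = Tbraid A d j (Tbraid A d i (Tbraid A d j P))"
proof
  fix k
  \<comment> \<open>the shift by \<open>d\<^sub>j\<close> in \<open>T\<^sub>j\<close> must meet the shifts by \<open>d\<^sub>i/2 = d\<^sub>j/2\<close> in \<open>T\<^sub>i\<close>\<close>
  have "(of_nat (d j) :: complex) = of_nat (d j) / 2 + of_nat (d j) / 2"
    by simp
  with assms show "Tbraid A d i (Tbraid A d j (Tbraid A d i P)) k = Tbraid A d j (Tbraid A d i (Tbraid A d j P)) k"
    by (cases "k = i"; cases "k = j")
      (simp_all add: Pset_def Tbraid_simps field_simps)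
qed

lemma Tbraid_braid_double:
  assumes "i \<noteq> j" "A i j = -2" "A j i = -1" "d i = 1" "d j = 2" "P \<in> Pset"
  shows "((Tbraid A d i \<circ> Tbraid A d j) ^^ 2) P = ((Tbraid A d j \<circ> Tbraid A d i) ^^ 2) P"
proof
  fix k
  have "P i \<noteq> 0" "P j \<noteq> 0" "P k \<noteq> 0"
    using \<open>P \<in> Pset\<close> by (auto simp: Pset_def)
  with assms show "((Tbraid A d i \<circ> Tbraid A d j) ^^ 2) P k = ((Tbraid A d j \<circ> Tbraid A d i) ^^ 2) P k"
    by (cases "k = i"; cases "k = j"; simp add: numeral_2_eq_2 Tbraid_simps add.assoc;
      simp add: field_simps Tbraid_factor_nonzero)
qed

lemma Tbraid_braid_triple:
  assumes "i \<noteq> j" "A i j = -3" "A j i = -1" "d i = 1" "d j = 3" "P \<in> Pset"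
  shows "((Tbraid A d i \<circ> Tbraid A d j) ^^ 3) P = ((Tbraid A d j \<circ> Tbraid A d i) ^^ 3) P"
proof
  fix k
  have "P i \<noteq> 0" "P j \<noteq> 0" "P k \<noteq> 0"
    using \<open>P \<in> Pset\<close> by (auto simp: Pset_def)
  with assms show "((Tbraid A d i \<circ> Tbraid A d j) ^^ 3) P k = ((Tbraid A d j \<circ> Tbraid A d i) ^^ 3) P k"
    by (cases "k = i"; cases "k = j"; simp add: numeral_3_eq_3 Tbraid_simps add.assoc;
      simp add: field_simps Tbraid_factor_nonzero)
qed

section \<open>Multiple bonds of a simple Cartan matrix\<close>

lemma nonpos_int_factors:
  fixes a b :: int
  assumes "a \<le> 0" "b \<le> 0" "a * b = n" "1 \<le> n"
  shows "-n \<le> a \<and> a \<le> -1 \<and> -n \<le> b \<and> b \<le> -1"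
proof -
  have a1: "a \<le> -1" "b \<le> -1"
    using assms by (auto simp: order.order_iff_strict)
  have "a * (b + 1) \<ge> 0" "(a + 1) * b \<ge> 0"
    using a1 by (simp_all add: mult_nonpos_nonpos)
  then show ?thesis
    using a1 assms(3) by (simp add: algebra_simps)
qed

lemma successively_if_consecutive:
  assumes "\<And>p u w r. xs = p @ u # w # r \<Longrightarrow> P u w"
  shows "successively P xs"
  using assms
proof (induction xs rule: induct_list012)
  case (3 x y r)
  have "successively P (y # r)"
    by (rule "3.IH"(2)) (use "3.prems" in \<open>metis append_Cons\<close>)
  moreover have "P x y"
    using "3.prems"[of "[]"] by simp
  ultimately show ?case
    by simp
qed simp_all

lemma successively_append_Cons_iff:
  "successively P (xs @ y # ys) \<longleftrightarrow> successively P (xs @ [y]) \<and> successively P (y # ys)"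
  by (induction xs rule: induct_list012) auto

definition cartan_form :: "('i::finite \<Rightarrow> 'i \<Rightarrow> int) \<Rightarrow> ('i \<Rightarrow> nat) \<Rightarrow> ('i \<Rightarrow> real) \<Rightarrow> real" where
  "cartan_form A d x = (\<Sum>i\<in>UNIV. \<Sum>j\<in>UNIV. real (d i) * of_int (A i j) * x i * x j)"

definition bonded :: "('i \<Rightarrow> 'i \<Rightarrow> int) \<Rightarrow> 'i \<Rightarrow> 'i \<Rightarrow> bool" where
  "bonded A u w \<longleftrightarrow> u \<noteq> w \<and> A u w \<noteq> 0"

definition simple_bond :: "('i \<Rightarrow> 'i \<Rightarrow> int) \<Rightarrow> 'i \<Rightarrow> 'i \<Rightarrow> bool" where
  "simple_bond A u w \<longleftrightarrow> A u w = -1 \<and> A w u = -1"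

definition multiple_bond :: "('i \<Rightarrow> 'i \<Rightarrow> int) \<Rightarrow> 'i \<Rightarrow> 'i \<Rightarrow> bool" where
  "multiple_bond A u w \<longleftrightarrow> u \<noteq> w \<and> A u w * A w u \<ge> 2"

lemma multiple_bond_sym: "multiple_bond A u w \<Longrightarrow> multiple_bond A w u"
  by (auto simp: multiple_bond_def mult.commute)

definition bond_path :: "('i \<Rightarrow> 'i \<Rightarrow> int) \<Rightarrow> 'i \<Rightarrow> 'i list \<Rightarrow> 'i \<Rightarrow> bool" where
  "bond_path A a vs e \<longleftrightarrow> vs \<noteq> [] \<and> successively (bonded A) vs \<and>
     multiple_bond A a (hd vs) \<and> multiple_bond A (last vs) e \<and> {a, hd vs} \<noteq> {last vs, e}"

definition shortest_bond_path :: "('i \<Rightarrow> 'i \<Rightarrow> int) \<Rightarrow> 'i \<Rightarrow> 'i list \<Rightarrow> 'i \<Rightarrow> bool" where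
  "shortest_bond_path A a vs e \<longleftrightarrow> bond_path A a vs e \<and>
     (\<forall>a' vs' e'. bond_path A a' vs' e' \<longrightarrow> length vs \<le> length vs')"

lemma shortest_bond_path_exists:
  assumes "bond_path A a vs e"
  shows "\<exists>a' vs' e'. shortest_bond_path A a' vs' e'"
  using ex_has_least_nat[of "\<lambda>vs. \<exists>a e. bond_path A a vs e" vs length] assms
  unfolding shortest_bond_path_def by blast

context
  fixes A :: "'i \<Rightarrow> 'i \<Rightarrow> int" and a e :: 'i and vs :: "'i list"
  assumes shortest_path: "shortest_bond_path A a vs e"
begin

private lemma path: "bond_path A a vs e"
  using shortest_path by (simp add: shortest_bond_path_def)

private lemma shortest: "bond_path A a' vs' e' \<Longrightarrow> length vs \<le> length vs'"
  using shortest_path unfolding shortest_bond_path_def by blast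

lemma shortest_bond_path_split:
  assumes "vs = p @ u # r"
  shows "successively (bonded A) (p @ [u])" "successively (bonded A) (u # r)"
  using path assms successively_append_Cons_iff[of "bonded A" p u r] by (simp_all add: bond_path_def)

lemma shortest_bond_path_distinct: "distinct vs"
proof (rule ccontr)
  assume "\<not> distinct vs"
  then obtain xs y ys zs where vs: "vs = xs @ y # ys @ y # zs"
    using not_distinct_decomp[of vs] by auto
  have "successively (bonded A) (y # zs)"
    using shortest_bond_path_split(2)[OF vs] successively_append_Cons_iff[of _ "y # ys" y zs] by simp
  then have "successively (bonded A) (xs @ y # zs)"
    unfolding successively_append_Cons_iff[of _ xs y zs] using shortest_bond_path_split(1)[OF vs] by blast
  moreover have "hd (xs @ y # zs) = hd vs" "last (xs @ y # zs) = last vs"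
    using vs by (cases xs; simp)+
  ultimately have "bond_path A a (xs @ y # zs) e"
    using path by (simp add: bond_path_def)
  with shortest vs show False
    by fastforce
qed

lemma shortest_bond_path_no_multiple_bond:
  assumes vs: "vs = p @ u # w # r"
  shows "\<not> multiple_bond A u w"
proof
  assume uw: "multiple_bond A u w"
  show False
  proof (cases "{a, hd vs} = {u, w}")
    case False
    have "hd (p @ [u]) = hd vs"
      using vs by (cases p) simp_all
    then have "bond_path A a (p @ [u]) w"
      using path shortest_bond_path_split(1)[OF vs] uw False by (simp add: bond_path_def)
    with shortest vs show False
      by fastforce
  next
    case True
    have "bond_path A u (w # r) e"
      using path shortest_bond_path_split(2)[of "p @ [u]" w r] vs uw True by (simp add: bond_path_def)
    with shortest vs show False
      by fastforce
  qed
qed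

lemma shortest_bond_path_ends_notin: "a \<notin> set vs" "e \<notin> set vs"
proof -
  show "a \<notin> set vs"
  proof
    assume "a \<in> set vs"
    then obtain p r where vs: "vs = p @ a # r"
      by (meson split_list)
    have "p \<noteq> []"
      using path vs by (auto simp: bond_path_def multiple_bond_def)
    moreover have "bond_path A (hd vs) (a # r) e"
      using path vs shortest_bond_path_split(2)[OF vs] multiple_bond_sym[of A a "hd vs"]
      by (auto simp: bond_path_def insert_commute)
    ultimately show False
      using shortest[of "hd vs" "a # r" e] vs by simp
  qed
  show "e \<notin> set vs"
  proof
    assume "e \<in> set vs"
    then obtain p r where vs: "vs = p @ e # r"
      by (meson split_list)
    have "r \<noteq> []"
      using path vs by (auto simp: bond_path_def multiple_bond_def)
    moreover have "hd (p @ [e]) = hd vs"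
      using vs by (cases p) simp_all
    ultimately have "bond_path A a (p @ [e]) (last vs)"
      using path vs shortest_bond_path_split(1)[OF vs] multiple_bond_sym[of A "last vs" e]
      by (auto simp: bond_path_def insert_commute)
    with \<open>r \<noteq> []\<close> show False
      using shortest[of a "p @ [e]" "last vs"] vs by simp
  qed
qed

lemma shortest_bond_path_ends_distinct: "a \<noteq> e"
proof
  assume "a = e"
  have "length vs \<ge> 2"
  proof (rule ccontr)
    assume "\<not> length vs \<ge> 2"
    then obtain v where "vs = [v]"
      using path by (cases vs rule: remdups_adj.cases) (auto simp: bond_path_def)
    with path \<open>a = e\<close> show False
      by (simp add: bond_path_def insert_commute)
  qed
  then have "hd vs \<noteq> last vs"
    using shortest_bond_path_distinct by (cases vs rule: remdups_adj.cases) auto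
  moreover have "hd vs \<noteq> a"
    using path by (auto simp: bond_path_def multiple_bond_def)
  ultimately have "bond_path A (hd vs) [a] (last vs)"
    using path \<open>a = e\<close> multiple_bond_sym[of A a "hd vs"] multiple_bond_sym[of A "last vs" e]
    by (auto simp: bond_path_def doubleton_eq_iff)
  with shortest[of "hd vs" "[a]" "last vs"] \<open>length vs \<ge> 2\<close> show False
    by simp
qed

end

context
  fixes A :: "'i::finite \<Rightarrow> 'i \<Rightarrow> int" and d :: "'i \<Rightarrow> nat"
  assumes cartan: "simple_cartan A d"
begin

lemma cartan_diag: "A i i = 2"
  using cartan by (simp add: simple_cartan_def)

lemma cartan_off_diag_nonpos: "i \<noteq> j \<Longrightarrow> A i j \<le> 0"
  using cartan by (simp add: simple_cartan_def)

lemma cartan_eq_0_sym: "A i j = 0 \<longleftrightarrow> A j i = 0"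
  using cartan by (simp add: simple_cartan_def)

lemma symmetrizer_pos: "d i > 0"
  using cartan by (simp add: simple_cartan_def)

lemma symmetrizer_Gcd: "Gcd (range d) = 1"
  using cartan by (simp add: simple_cartan_def)

lemma symmetrizer_sym: "int (d i) * A i j = int (d j) * A j i"
  using cartan by (simp add: simple_cartan_def)

lemma symmetrizer_sym_real: "real (d i) * of_int (A i j) = real (d j) * of_int (A j i)"
  using arg_cong[OF symmetrizer_sym, of real_of_int] by simp

lemma cartan_form_pos: "x \<noteq> (\<lambda>_. 0) \<Longrightarrow> cartan_form A d x > 0"
  using cartan by (simp add: simple_cartan_def cartan_form_def)

lemma cartan_connected: "J \<noteq> {} \<Longrightarrow> J \<noteq> UNIV \<Longrightarrow> \<exists>i\<in>J. \<exists>j\<in>-J. A i j \<noteq> 0"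
  using cartan by (simp add: simple_cartan_def)

lemma bonded_path_exists:
  obtains vs where "vs \<noteq> []" "hd vs = u" "last vs = v" "successively (bonded A) vs"
proof -
  define J where "J = {v. \<exists>vs. vs \<noteq> [] \<and> hd vs = u \<and> last vs = v \<and> successively (bonded A) vs}"
  have "J = UNIV"
  proof (rule ccontr)
    assume "J \<noteq> UNIV"
    moreover have "u \<in> J"
      unfolding J_def by (auto intro!: exI[of _ "[u]"])
    ultimately obtain x y where "x \<in> J" "y \<notin> J" "A x y \<noteq> 0"
      using cartan_connected[of J] by auto
    then obtain vs where vs: "vs \<noteq> []" "hd vs = u" "last vs = x" "successively (bonded A) vs"
      unfolding J_def by auto
    have "bonded A x y"
      using \<open>x \<in> J\<close> \<open>y \<notin> J\<close> \<open>A x y \<noteq> 0\<close> by (auto simp: bonded_def)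
    with vs have "successively (bonded A) (vs @ [y])"
      by (simp add: successively_append_iff)
    with vs have "y \<in> J"
      unfolding J_def by (intro CollectI exI[of _ "vs @ [y]"]) simp
    with \<open>y \<notin> J\<close> show False ..
  qed
  then show ?thesis
    using that unfolding J_def by blast
qed

lemma bonded_simple_or_multiple:
  assumes "bonded A u w"
  shows "simple_bond A u w \<or> multiple_bond A u w"
proof -
  have neg: "A u w \<le> -1" "A w u \<le> -1"
    using assms cartan_off_diag_nonpos[of u w] cartan_off_diag_nonpos[of w u] cartan_eq_0_sym[of u w]
    by (auto simp: bonded_def)
  have "1 * 1 \<le> (- A u w) * (- A w u)"
    by (rule mult_mono) (use neg in auto)
  then consider "A u w * A w u = 1" | "A u w * A w u \<ge> 2"
    by fastforce
  then show ?thesis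
  proof cases
    case 1
    then show ?thesis
      using nonpos_int_factors[of "A u w" "A w u" 1] neg by (simp add: simple_bond_def)
  next
    case 2
    then show ?thesis
      using assms by (simp add: bonded_def multiple_bond_def)
  qed
qed

lemma simple_bond_symmetrizer_eq: "simple_bond A u w \<Longrightarrow> d u = d w"
  using symmetrizer_sym[of u w] by (simp add: simple_bond_def)

lemma multiple_bond_neg:
  assumes "multiple_bond A u w"
  shows "A u w < 0" "A w u < 0"
proof -
  have "A u w \<noteq> 0" "A w u \<noteq> 0"
    using assms by (auto simp: multiple_bond_def)
  then show "A u w < 0" "A w u < 0"
    using assms cartan_off_diag_nonpos[of u w] cartan_off_diag_nonpos[of w u]
    by (auto simp: multiple_bond_def)
qed

lemma cartan_form_add_unit:
  "cartan_form A d (\<lambda>k. x k + (if k = w then c else 0)) =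
   cartan_form A d x + 2 * c * (\<Sum>i\<in>UNIV. real (d i) * of_int (A i w) * x i) + 2 * c\<^sup>2 * real (d w)"
proof -
  let ?B = "\<lambda>i j. real (d i) * of_int (A i j)"
  let ?e = "\<lambda>k. if k = w then c else 0"
  have delta: "(\<Sum>i\<in>UNIV. ?e i * f i) = c * f w" for f :: "'i \<Rightarrow> real"
  proof -
    have "(\<Sum>i\<in>UNIV. ?e i * f i) = (\<Sum>i\<in>UNIV. if i = w then c * f i else 0)"
      by (rule sum.cong) simp_all
    then show ?thesis
      by simp
  qed
  have "cartan_form A d (\<lambda>k. x k + ?e k) = cartan_form A d x
      + (\<Sum>i\<in>UNIV. \<Sum>j\<in>UNIV. ?e j * (?B i j * x i))
      + (\<Sum>i\<in>UNIV. ?e i * (\<Sum>j\<in>UNIV. ?B i j * x j))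
      + (\<Sum>i\<in>UNIV. ?e i * (\<Sum>j\<in>UNIV. ?e j * ?B i j))"
    by (simp add: cartan_form_def algebra_simps sum.distrib sum_distrib_left)
  also have "\<dots> = cartan_form A d x + c * (\<Sum>i\<in>UNIV. ?B i w * x i)
      + c * (\<Sum>j\<in>UNIV. ?B w j * x j) + c * (c * ?B w w)"
    by (simp add: delta flip: sum_distrib_left)
  also have "(\<Sum>j\<in>UNIV. ?B w j * x j) = (\<Sum>i\<in>UNIV. ?B i w * x i)"
    using symmetrizer_sym_real by simp
  finally show ?thesis
    by (simp add: cartan_diag power2_eq_square)
qed

lemma cartan_column_sum_le:
  assumes "\<And>i. x i \<ge> 0" "x w = 0" "v \<noteq> w"
  shows "(\<Sum>i\<in>UNIV. real (d i) * of_int (A i w) * x i) \<le> real (d v) * of_int (A v w) * x v"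
proof -
  have "(\<Sum>i\<in>UNIV - {v}. real (d i) * of_int (A i w) * x i) \<le> 0"
  proof (rule sum_nonpos)
    fix i
    show "real (d i) * of_int (A i w) * x i \<le> 0"
    proof (cases "i = w")
      case False
      then have "real (d i) * of_int (A i w) \<le> 0"
        using cartan_off_diag_nonpos[of i w] by (simp add: mult_nonneg_nonpos)
      then show ?thesis
        using assms(1)[of i] by (simp add: mult_nonpos_nonneg)
    qed (use assms(2) in simp)
  qed
  then show ?thesis
    by (simp add: sum.remove[of UNIV v])
qed

lemma simple_chain_symmetrizer_eq:
  "successively (simple_bond A) vs \<Longrightarrow> v \<in> set vs \<Longrightarrow> d v = d (hd vs)"
  by (induction vs rule: induct_list012) (auto dest: simple_bond_symmetrizer_eq)

lemma simple_chain_form_le: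
  assumes "successively (simple_bond A) vs" "distinct vs" "vs \<noteq> []"
  shows "cartan_form A d (\<lambda>k. of_bool (k \<in> set vs)) \<le> 2 * real (d (hd vs))"
  using assms
proof (induction vs rule: induct_list012)
  case (2 x)
  have "cartan_form A d (\<lambda>k. 0 + (if k = x then 1 else 0)) = 2 * real (d x)"
    unfolding cartan_form_add_unit by (simp add: cartan_form_def)
  moreover have "(\<lambda>k. of_bool (k \<in> set [x])) = (\<lambda>k. 0 + (if k = x then 1 else 0 :: real))"
    by auto
  ultimately show ?case
    by simp
next
  case (3 x y r)
  have "(\<lambda>k. of_bool (k \<in> set (x # y # r))) =
      (\<lambda>k. of_bool (k \<in> set (y # r)) + (if k = x then 1 else 0 :: real))"
    using "3.prems"(2) by auto
  moreover have "(\<Sum>i\<in>UNIV. real (d i) * of_int (A i x) * of_bool (i \<in> set (y # r))) \<le> - real (d y)"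
    using cartan_column_sum_le[of "\<lambda>k. of_bool (k \<in> set (y # r))" x y] "3.prems"
    by (auto simp: simple_bond_def)
  moreover have "d x = d y"
    using "3.prems"(1) by (simp add: simple_bond_symmetrizer_eq)
  ultimately show ?case
    using "3.IH"(2) "3.prems" by (simp add: cartan_form_add_unit)
qed simp

text \<open>The weight \<open>-a\<^sub>a\<^sub>v/2\<close> put on the new vertex \<open>a\<close> minimises the form in that direction.\<close>

lemma cartan_form_attach_le:
  assumes "\<And>i. x i \<ge> 0" "x a = 0" "x v = 1" "multiple_bond A v a"
  shows "cartan_form A d (\<lambda>k. x k + (if k = a then - of_int (A a v) / 2 else 0)) \<le> cartan_form A d x - real (d v)"
proof -
  define t where "t = - real_of_int (A a v) / 2"
  have "t \<ge> 0"
    using multiple_bond_neg(2)[OF assms(4)] by (simp add: t_def)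
  have "v \<noteq> a"
    using assms(4) by (simp add: multiple_bond_def)
  have "2 * t * (\<Sum>i\<in>UNIV. real (d i) * of_int (A i a) * x i) \<le> 2 * t * (real (d v) * of_int (A v a))"
    using cartan_column_sum_le[of x a v] assms(1-3) \<open>v \<noteq> a\<close> \<open>t \<ge> 0\<close>
    by (simp add: mult_left_mono)
  also have "\<dots> + 2 * t\<^sup>2 * real (d a) = - real (d v) * (of_int (A v a) * of_int (A a v)) / 2"
    using symmetrizer_sym_real[of a v] by (simp add: t_def power2_eq_square field_simps)
  also have "\<dots> \<le> - real (d v)"
  proof -
    have "of_int (A v a) * of_int (A a v) \<ge> (2 :: real)"
      using assms(4) unfolding multiple_bond_def by (metis of_int_le_iff of_int_mult of_int_numeral)
    then show ?thesis
      using symmetrizer_pos[of v] by (simp add: field_simps)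
  qed
  finally show ?thesis
    unfolding t_def[symmetric] cartan_form_add_unit by simp
qed

lemma no_simple_chain_between_multiple_bonds:
  assumes "vs \<noteq> []" "successively (simple_bond A) vs" "distinct vs"
    and "a \<notin> set vs" "e \<notin> set vs" "a \<noteq> e"
    and "multiple_bond A a (hd vs)" "multiple_bond A (last vs) e"
  shows False
proof -
  define x where "x k = (of_bool (k \<in> set vs) :: real)" for k
  define y where "y k = x k + (if k = a then - of_int (A a (hd vs)) / 2 else 0)" for k
  define z where "z k = y k + (if k = e then - of_int (A e (last vs)) / 2 else 0)" for k
  have ends: "hd vs \<in> set vs" "last vs \<in> set vs"
    using \<open>vs \<noteq> []\<close> by simp_all
  have "cartan_form A d x \<le> 2 * real (d (hd vs))"
    unfolding x_def by (rule simple_chain_form_le[OF assms(2,3,1)])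
  moreover have "cartan_form A d y \<le> cartan_form A d x - real (d (hd vs))"
    unfolding y_def using assms(4) ends multiple_bond_neg[OF assms(7)] multiple_bond_sym[OF assms(7)]
    by (intro cartan_form_attach_le) (auto simp: x_def)
  moreover have "cartan_form A d z \<le> cartan_form A d y - real (d (last vs))"
    unfolding z_def using assms(4-6) ends multiple_bond_neg[OF assms(7)] assms(8)
    by (intro cartan_form_attach_le) (auto simp: x_def y_def)
  moreover have "d (last vs) = d (hd vs)"
    using simple_chain_symmetrizer_eq[OF assms(2) ends(2)] .
  moreover have "z (hd vs) = 1"
    using assms(4,5) ends by (auto simp: x_def y_def z_def)
  then have "z \<noteq> (\<lambda>_. 0)"
    by auto
  ultimately show False
    using cartan_form_pos[of z] by linarith
qed

lemma multiple_bond_unique: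
  assumes "multiple_bond A a b" "multiple_bond A c e"
  shows "{a, b} = {c, e}"
proof (rule ccontr)
  assume "{a, b} \<noteq> {c, e}"
  moreover obtain vs where "vs \<noteq> []" "hd vs = b" "last vs = c" "successively (bonded A) vs"
    by (rule bonded_path_exists)
  ultimately have "bond_path A a vs e"
    using assms by (simp add: bond_path_def)
  then obtain a' vs' e' where shortest: "shortest_bond_path A a' vs' e'"
    by (meson shortest_bond_path_exists)
  have "successively (simple_bond A) vs'"
  proof (rule successively_if_consecutive)
    fix p u w r
    assume split: "vs' = p @ u # w # r"
    then have "bonded A u w"
      using shortest_bond_path_split(2)[OF shortest split] by simp
    then show "simple_bond A u w"
      using bonded_simple_or_multiple shortest_bond_path_no_multiple_bond[OF shortest split] by blast
  qed
  then show False
    using shortest shortest_bond_path_distinct[OF shortest] shortest_bond_path_ends_notin[OF shortest]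
      shortest_bond_path_ends_distinct[OF shortest]
    by (intro no_simple_chain_between_multiple_bonds[of vs' a' e']) (auto simp: shortest_bond_path_def bond_path_def)
qed

lemma multiple_bond_short_end_symmetrizer_eq_1:
  assumes "i \<noteq> j" "A j i = -1" "A i j \<le> -2"
  shows "d i = 1"
proof -
  have ij: "multiple_bond A i j"
    using assms by (simp add: multiple_bond_def)
  define J where "J = {k. d i dvd d k}"
  have "int (d j) = int (d i) * (- A i j)"
    using symmetrizer_sym[of i j] assms(2) by simp
  then have "d i dvd d j"
    by (metis dvd_triv_left int_dvd_int_iff)
  then have "i \<in> J" "j \<in> J"
    by (simp_all add: J_def)
  have "J = UNIV"
  proof (rule ccontr)
    assume "J \<noteq> UNIV"
    then obtain k m where "k \<in> J" "m \<notin> J" "A k m \<noteq> 0"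
      using cartan_connected[of J] \<open>i \<in> J\<close> by blast
    then have "bonded A k m"
      by (auto simp: bonded_def)
    then consider "simple_bond A k m" | "multiple_bond A k m"
      using bonded_simple_or_multiple by blast
    then show False
    proof cases
      case 1
      then show False
        using simple_bond_symmetrizer_eq \<open>k \<in> J\<close> \<open>m \<notin> J\<close> by (simp add: J_def)
    next
      case 2
      then have "m \<in> {i, j}"
        using multiple_bond_unique[OF 2 ij] by blast
      then show False
        using \<open>m \<notin> J\<close> \<open>i \<in> J\<close> \<open>j \<in> J\<close> by blast
    qed
  qed
  then have "d i dvd Gcd (range d)"
    by (auto simp: J_def intro: Gcd_greatest)
  then show ?thesis
    using symmetrizer_Gcd by simp
qed

lemma cartan_product_eq_1:
  assumes "i \<noteq> j" "A i j * A j i = 1"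
  shows "A i j = -1 \<and> A j i = -1 \<and> d i = d j"
  using nonpos_int_factors[OF cartan_off_diag_nonpos cartan_off_diag_nonpos assms(2)] assms(1)
    symmetrizer_sym[of i j]
  by auto

lemma cartan_product_eq_2_or_3:
  assumes "i \<noteq> j" "A i j * A j i = int n" "n \<in> {2, 3}"
  shows "A i j = - int n \<and> A j i = -1 \<and> d i = 1 \<and> d j = n
    \<or> A i j = -1 \<and> A j i = - int n \<and> d i = n \<and> d j = 1"
proof -
  have "A i j \<in> {-3, -2, -1}" "A j i \<in> {-3, -2, -1}"
    using nonpos_int_factors[OF cartan_off_diag_nonpos cartan_off_diag_nonpos assms(2)] assms(1,3)
    by auto
  then consider "A i j = - int n" "A j i = -1" | "A i j = -1" "A j i = - int n"
    using assms(2,3) by auto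
  then show ?thesis
  proof cases
    case 1
    then have "d i = 1"
      using multiple_bond_short_end_symmetrizer_eq_1[OF assms(1)] assms(3) by auto
    then show ?thesis
      using 1 symmetrizer_sym[of i j] by simp
  next
    case 2
    then have "d j = 1"
      using multiple_bond_short_end_symmetrizer_eq_1[of j i] assms(1,3) by auto
    then show ?thesis
      using 2 symmetrizer_sym[of i j] by simp
  qed
qed

section \<open>Braid relations\<close>

lemma Tbraid_braid_product_0:
  assumes "i \<noteq> j" "A i j * A j i = 0" "P \<in> Pset"
  shows "Tbraid A d i (Tbraid A d j P) = Tbraid A d j (Tbraid A d i P)"
  using assms cartan_eq_0_sym[of i j] by (auto intro: Tbraid_commute)

lemma Tbraid_braid_product_1:
  assumes "i \<noteq> j" "A i j * A j i = 1" "P \<in> Pset"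
  shows "Tbraid A d i (Tbraid A d j (Tbraid A d i P)) = Tbraid A d j (Tbraid A d i (Tbraid A d j P))"
  using assms cartan_product_eq_1[OF assms(1,2)] by (auto intro: Tbraid_braid_simple)

lemma Tbraid_braid_product_2:
  assumes "i \<noteq> j" "A i j * A j i = 2" "P \<in> Pset"
  shows "((Tbraid A d i \<circ> Tbraid A d j) ^^ 2) P = ((Tbraid A d j \<circ> Tbraid A d i) ^^ 2) P"
proof -
  consider "A i j = -2" "A j i = -1" "d i = 1" "d j = 2" | "A i j = -1" "A j i = -2" "d i = 2" "d j = 1"
    using cartan_product_eq_2_or_3[of i j 2] assms(1,2) by auto
  then show ?thesis
  proof cases
    case 1
    then show ?thesis
      using assms by (intro Tbraid_braid_double)
  next
    case 2
    then show ?thesis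
      using assms by (intro Tbraid_braid_double[symmetric]) auto
  qed
qed

lemma Tbraid_braid_product_3:
  assumes "i \<noteq> j" "A i j * A j i = 3" "P \<in> Pset"
  shows "((Tbraid A d i \<circ> Tbraid A d j) ^^ 3) P = ((Tbraid A d j \<circ> Tbraid A d i) ^^ 3) P"
proof -
  consider "A i j = -3" "A j i = -1" "d i = 1" "d j = 3" | "A i j = -1" "A j i = -3" "d i = 3" "d j = 1"
    using cartan_product_eq_2_or_3[of i j 3] assms(1,2) by auto
  then show ?thesis
  proof cases
    case 1
    then show ?thesis
      using assms by (intro Tbraid_braid_triple)
  next
    case 2
    then show ?thesis
      using assms by (intro Tbraid_braid_triple[symmetric]) auto
  qed
qed

end

theorem mainTheorem1:
  fixes A :: "'i::finite \<Rightarrow> 'i \<Rightarrow> int" and d :: "'i \<Rightarrow> nat"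
  assumes "simple_cartan A d"
  shows "(\<forall>j. bij_betw (Tbraid A d j) Pset Pset) \<and>
    (\<forall>i j. i \<noteq> j \<longrightarrow> (\<forall>P\<in>Pset.
       (A i j * A j i = 0 \<longrightarrow>
          Tbraid A d i (Tbraid A d j P) = Tbraid A d j (Tbraid A d i P)) \<and>
       (A i j * A j i = 1 \<longrightarrow>
          Tbraid A d i (Tbraid A d j (Tbraid A d i P)) = Tbraid A d j (Tbraid A d i (Tbraid A d j P))) \<and>
       (A i j * A j i = 2 \<longrightarrow>
          ((Tbraid A d i \<circ> Tbraid A d j) ^^ 2) P = ((Tbraid A d j \<circ> Tbraid A d i) ^^ 2) P) \<and>
       (A i j * A j i = 3 \<longrightarrow>
          ((Tbraid A d i \<circ> Tbraid A d j) ^^ 3) P = ((Tbraid A d j \<circ> Tbraid A d i) ^^ 3) P)))"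
proof (intro conjI allI impI ballI)
  show "bij_betw (Tbraid A d j) Pset Pset" for j
    by (rule Tbraid_bij)
  fix i j :: 'i and P :: "'i \<Rightarrow> ratfun"
  assume "i \<noteq> j" "P \<in> Pset"
  then show
    "A i j * A j i = 0 \<Longrightarrow> Tbraid A d i (Tbraid A d j P) = Tbraid A d j (Tbraid A d i P)"
    "A i j * A j i = 1 \<Longrightarrow>
       Tbraid A d i (Tbraid A d j (Tbraid A d i P)) = Tbraid A d j (Tbraid A d i (Tbraid A d j P))"
    "A i j * A j i = 2 \<Longrightarrow>
       ((Tbraid A d i \<circ> Tbraid A d j) ^^ 2) P = ((Tbraid A d j \<circ> Tbraid A d i) ^^ 2) P"
    "A i j * A j i = 3 \<Longrightarrow>
       ((Tbraid A d i \<circ> Tbraid A d j) ^^ 3) P = ((Tbraid A d j \<circ> Tbraid A d i) ^^ 3) P"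
    using Tbraid_braid_product_0[OF assms] Tbraid_braid_product_1[OF assms]
      Tbraid_braid_product_2[OF assms] Tbraid_braid_product_3[OF assms]
    by blast+
qed

end
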